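(* Let $a,n\in\mathbb{N}$, $k_1,\ldots,k_n\in\mathbb{N}$, $K=\operatorname{lcm}(k_1,\ldots,k_n)$, and let $f_1,\ldots,f_n,g_1,\ldots,g_n$ be arbitrary arithmetic functions. Define $G(m)=\prod_{i=1}^n s^{(a)}_{f_i,g_i,\mathbf 1}(k_i,m)$ for $m\in\mathbb{N}$. (i) If $\omega$ is completely multiplicative, then $$\sum_{j=1}^{K^a}\omega(j)G(j)=\sum_{d|K^a}\omega(d)G(d)\,\Psi\Bigl(\frac{K^a}{d}\Bigr)=\bigl((\omega G)*\Psi\bigr)(K^a),$$ (ii) If $\omega$ is completely additive, then $$\sum_{j=1}^{K^a}\omega(j)G(j)=\bigl((\omega G)*\phi\bigr)(K^a)+(G*\Psi)(K^a).$$ Here $\Psi(m)=\sum_{1\le\ell\le m,\ \gcd(\ell,m)=1}\omega(\ell)$.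
   Context: An arithmetic function is a map $\mathbb{N}\to\mathbb{C}$; $(f*g)(n)=\sum_{d|n}f(d)g(n/d)$ is the Dirichlet convolution and $\omega G$ denotes the pointwise product $m\mapsto\omega(m)G(m)$. $\phi$ is Euler's totient function. $\omega$ is completely multiplicative if $\omega(1)=1$ and $\omega(mn)=\omega(m)\omega(n)$ for all $m,n$; completely additive if $\omega(mn)=\omega(m)+\omega(n)$ for all $m,n$. For $a\in\mathbb{N}$, $s^{(a)}_{f,g,\mathbf 1}(k,j)=\sum_{d|k,\ d^a|j} f(d)\,g(k/d)$. *)

theory Defs
  imports Complex_Main "HOL-Number_Theory.Number_Theory"
begin

text \<open>Arithmetic functions are modelled as nat => complex; values at 0 are irrelevant.\<close>

definition dirichlet_conv :: "(nat \<Rightarrow> complex) \<Rightarrow> (nat \<Rightarrow> complex) \<Rightarrow> nat \<Rightarrow> complex" where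
  "dirichlet_conv f g n = (\<Sum>d\<in>{d. d dvd n}. f d * g (n div d))"

definition completely_multiplicative :: "(nat \<Rightarrow> complex) \<Rightarrow> bool" where
  "completely_multiplicative w \<longleftrightarrow> w 1 = 1 \<and> (\<forall>m n. m > 0 \<longrightarrow> n > 0 \<longrightarrow> w (m * n) = w m * w n)"

definition completely_additive :: "(nat \<Rightarrow> complex) \<Rightarrow> bool" where
  "completely_additive w \<longleftrightarrow> (\<forall>m n. m > 0 \<longrightarrow> n > 0 \<longrightarrow> w (m * n) = w m + w n)"

definition s_fun :: "nat \<Rightarrow> (nat \<Rightarrow> complex) \<Rightarrow> (nat \<Rightarrow> complex) \<Rightarrow> nat \<Rightarrow> nat \<Rightarrow> complex" where
  "s_fun a f g k j = (\<Sum>d\<in>{d. d dvd k \<and> d ^ a dvd j}. f d * g (k div d))"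

definition Psi :: "(nat \<Rightarrow> complex) \<Rightarrow> nat \<Rightarrow> complex" where
  "Psi w m = (\<Sum>l\<in>{l\<in>{1..m}. coprime l m}. w l)"

end

theory Submission
  imports Defs
begin

text \<open>Each factor s^(a)(k_i, j) only depends on which d^a with d | k_i divide j, and all of
  these divide N = K^a; hence G(j) = G(gcd(j, N)). Grouping 1 \<le> j \<le> N by d = gcd(j, N) writes
  j = d l with l running over the residues coprime to N/d, so the sum becomes
  \<Sum>_{d|N} G(d) \<Sum>_l \<omega>(d l). Complete multiplicativity splits \<omega>(d l) = \<omega>(d) \<omega>(l), complete
  additivity \<omega>(d l) = \<omega>(d) + \<omega>(l), and the inner sums become \<Psi>(N/d) and \<phi>(N/d).\<close>

lemma gcd_mult_coprime_quotient:
  fixes N d l :: nat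
  assumes "N > 0" "d dvd N" "coprime l (N div d)"
  shows "gcd (d * l) N = d"
proof -
  obtain m where m: "N = d * m" using \<open>d dvd N\<close> ..
  with \<open>N > 0\<close> have "N div d = m" by simp
  have "gcd (d * l) N = d * gcd l m" unfolding m by (rule gcd_mult_distrib_nat[symmetric])
  with assms(3) \<open>N div d = m\<close> show ?thesis by simp
qed

lemma sum_atLeastAtMost_group_gcd:
  fixes N :: nat and F :: "nat \<Rightarrow> 'a :: comm_monoid_add"
  assumes "N > 0"
  shows "(\<Sum>j=1..N. F j) =
           (\<Sum>d | d dvd N. \<Sum>l\<in>{l\<in>{1..N div d}. coprime l (N div d)}. F (d * l))"
proof -
  have "(\<Sum>j=1..N. F j) = (\<Sum>d | d dvd N. \<Sum>j\<in>{j\<in>{1..N}. gcd j N = d}. F j)"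
    by (rule sum.group[symmetric]) (use assms in auto)
  also have "\<dots> = (\<Sum>d | d dvd N. \<Sum>l\<in>{l\<in>{1..N div d}. coprime l (N div d)}. F (d * l))"
  proof (rule sum.cong[OF refl])
    fix d assume "d \<in> {d. d dvd N}"
    then have "d dvd N" by simp
    then obtain m where m: "N = d * m" ..
    with assms have "d > 0" "N div d = m" by auto
    let ?L = "{l\<in>{1..N div d}. coprime l (N div d)}"
    have "{j\<in>{1..N}. gcd j N = d} = (*) d ` ?L"
    proof (rule Set.set_eqI, rule iffI)
      fix j assume "j \<in> {j\<in>{1..N}. gcd j N = d}"
      then have j: "gcd j N = d" "1 \<le> j" "j \<le> N" by simp_all
      then have "d dvd j" by (metis gcd_dvd1)
      then obtain l where l: "j = d * l" ..
      have "d * gcd l m = d" using j(1) unfolding l m by (simp only: gcd_mult_distrib_nat)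
      then have "gcd l m = 1" using \<open>d > 0\<close> by (metis mult.right_neutral mult_left_cancel not_gr0)
      then have "coprime l m" by (rule gcd_eq_1_imp_coprime)
      moreover have "1 \<le> l" using j(2) l by (cases l) auto
      moreover have "l \<le> m" using j(3) \<open>d > 0\<close> unfolding l m by simp
      ultimately have "l \<in> ?L" unfolding \<open>N div d = m\<close> by simp
      then show "j \<in> (*) d ` ?L" unfolding l by (rule imageI)
    next
      fix j assume "j \<in> (*) d ` ?L"
      then obtain l where l: "j = d * l" "l \<in> ?L" by auto
      then have "gcd j N = d"
        using gcd_mult_coprime_quotient[OF assms \<open>d dvd N\<close>] by simp
      moreover have "1 \<le> j" "j \<le> N"
        using l m \<open>N div d = m\<close> \<open>d > 0\<close> by auto
      ultimately show "j \<in> {j\<in>{1..N}. gcd j N = d}" by simp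
    qed
    moreover have "inj_on ((*) d) ?L" using \<open>d > 0\<close> by (auto simp: inj_on_def)
    ultimately show "(\<Sum>j\<in>{j\<in>{1..N}. gcd j N = d}. F j) = (\<Sum>l\<in>?L. F (d * l))"
      by (simp add: sum.reindex)
  qed
  finally show ?thesis .
qed

lemma s_fun_gcd:
  assumes "k ^ a dvd N"
  shows "s_fun a f g k (gcd j N) = s_fun a f g k j"
proof -
  have "d ^ a dvd gcd j N \<longleftrightarrow> d ^ a dvd j" if "d dvd k" for d
    using dvd_trans[OF dvd_power_same[OF that] assms] by simp
  then show ?thesis unfolding s_fun_def by metis
qed

lemma sum_weighted_gcd_invariant:
  fixes N :: nat and w G :: "nat \<Rightarrow> complex"
  assumes "N > 0" and G_gcd: "\<And>j. G (gcd j N) = G j"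
  shows "(\<Sum>j=1..N. w j * G j) =
           (\<Sum>d | d dvd N. G d * (\<Sum>l\<in>{l\<in>{1..N div d}. coprime l (N div d)}. w (d * l)))"
  unfolding sum_atLeastAtMost_group_gcd[OF \<open>N > 0\<close>] sum_distrib_left
proof (intro sum.cong refl)
  fix d l assume "d \<in> {d. d dvd N}" "l \<in> {l\<in>{1..N div d}. coprime l (N div d)}"
  then have "gcd (d * l) N = d" using gcd_mult_coprime_quotient[OF \<open>N > 0\<close>] by simp
  then have "G (d * l) = G d" using G_gcd[of "d * l"] by simp
  then show "w (d * l) * G (d * l) = G d * w (d * l)" by simp
qed

lemma sum_gcd_invariant_completely_multiplicative:
  fixes N :: nat and w G :: "nat \<Rightarrow> complex"
  assumes "completely_multiplicative w" "N > 0" "\<And>j. G (gcd j N) = G j"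
  shows "(\<Sum>j=1..N. w j * G j) = dirichlet_conv (\<lambda>m. w m * G m) (Psi w) N"
  unfolding sum_weighted_gcd_invariant[where w = w and G = G, OF assms(2,3)] dirichlet_conv_def Psi_def
proof (intro sum.cong refl)
  fix d assume "d \<in> {d. d dvd N}"
  with \<open>N > 0\<close> have "d > 0" by (auto intro: gr0I)
  with assms(1) show "G d * (\<Sum>l\<in>{l\<in>{1..N div d}. coprime l (N div d)}. w (d * l)) =
      w d * G d * (\<Sum>l\<in>{l\<in>{1..N div d}. coprime l (N div d)}. w l)"
    by (simp add: completely_multiplicative_def sum_distrib_left mult_ac)
qed

lemma sum_gcd_invariant_completely_additive:
  fixes N :: nat and w G :: "nat \<Rightarrow> complex"
  assumes "completely_additive w" "N > 0" "\<And>j. G (gcd j N) = G j"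
  shows "(\<Sum>j=1..N. w j * G j) =
           dirichlet_conv (\<lambda>m. w m * G m) (\<lambda>m. of_nat (totient m)) N + dirichlet_conv G (Psi w) N"
  unfolding sum_weighted_gcd_invariant[where w = w and G = G, OF assms(2,3)] dirichlet_conv_def sum.distrib[symmetric]
proof (intro sum.cong refl)
  fix d assume "d \<in> {d. d dvd N}"
  with \<open>N > 0\<close> have "d > 0" by (auto intro: gr0I)
  define L where "L = {l\<in>{1..N div d}. coprime l (N div d)}"
  have "L = totatives (N div d)" unfolding L_def totatives_def by auto
  then have "card L = totient (N div d)" by (simp add: totient_def)
  moreover have "(\<Sum>l\<in>L. w (d * l)) = (\<Sum>l\<in>L. w d + w l)"
    using assms(1) \<open>d > 0\<close> unfolding L_def
    by (intro sum.cong refl) (auto simp: completely_additive_def)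
  ultimately show "G d * (\<Sum>l\<in>L. w (d * l)) =
      w d * G d * of_nat (totient (N div d)) + G d * Psi w (N div d)"
    unfolding Psi_def L_def[symmetric] by (simp add: sum.distrib algebra_simps)
qed

theorem theorem3:
  fixes a n :: nat
    and k :: "nat \<Rightarrow> nat"
    and f g :: "nat \<Rightarrow> nat \<Rightarrow> complex"
    and w :: "nat \<Rightarrow> complex"
    and K :: nat
    and G :: "nat \<Rightarrow> complex"
  assumes "a > 0" and "n > 0"
    and "\<forall>i\<in>{1..n}. k i > 0"
    and K_def: "K = Lcm (k ` {1..n})"
    and G_def: "\<forall>m. G m = (\<Prod>i\<in>{1..n}. s_fun a (f i) (g i) (k i) m)"
  shows "(completely_multiplicative w \<longrightarrow>
            (\<Sum>j=1..K^a. w j * G j) = (\<Sum>d\<in>{d. d dvd K^a}. w d * G d * Psi w (K^a div d))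
          \<and> (\<Sum>d\<in>{d. d dvd K^a}. w d * G d * Psi w (K^a div d))
              = dirichlet_conv (\<lambda>m. w m * G m) (Psi w) (K^a))
       \<and> (completely_additive w \<longrightarrow>
            (\<Sum>j=1..K^a. w j * G j)
              = dirichlet_conv (\<lambda>m. w m * G m) (\<lambda>m. of_nat (totient m)) (K^a)
                + dirichlet_conv G (Psi w) (K^a))"
proof -
  have "0 \<notin> k ` {1..n}" using assms(3) by auto
  then have "K \<noteq> 0" unfolding K_def by (subst Lcm_0_iff) auto
  then have N_pos: "K ^ a > 0" by simp
  have "s_fun a (f i) (g i) (k i) (gcd j (K ^ a)) = s_fun a (f i) (g i) (k i) j"
    if "i \<in> {1..n}" for i j
    using that by (intro s_fun_gcd dvd_power_same) (simp add: K_def)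
  then have G_gcd: "G (gcd j (K ^ a)) = G j" for j
    unfolding G_def[rule_format] by (intro prod.cong refl)
  show ?thesis
    using sum_gcd_invariant_completely_multiplicative[where G = G, OF _ N_pos G_gcd]
      sum_gcd_invariant_completely_additive[where G = G, OF _ N_pos G_gcd]
    by (simp add: dirichlet_conv_def)
qed

end
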